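(* Suppose $n_0>0$ and consider an orbit of the system in the interior of the cube that converges as $\lambda\to+\infty$ to $P_2=(U,Q,\Omega)=(0,1,0)$. Then the limits $$C=\lim_{\lambda\to\infty}\frac{\Omega^{1/a}}{1-Q},\qquad D=\lim_{\lambda\to\infty}\frac{\Omega^{n_0/a}}{U}$$ exist and are positive and finite, and the corresponding perfect fluid solution has finite radius $R$ and total mass $M$ given by $$R^2=\frac{1}{4\pi\rho_-}\frac{C}{D},\qquad M^2=\frac{1}{4\pi\rho_-}\frac{C^3}{D}.$$ Moreover near the surface, with $\delta r=(R-r)/R$, the Newtonian potential satisfies $v(r)=-C\delta r-C\delta r^2+v_S+O(\delta r^{2+\min(1,n_0)})$.
   Context: Equation of state: $\rho=\rho(p)$ with $\rho>0$ for $p>0$, $\eta(p)=\int_0^p dp'/\rho(p')$ finite; index function $n(\eta)=\frac{\eta}{\rho}\frac{d\rho}{d\eta}$; asymptotically polytropic with $\rho(\eta)=\rho_-\eta^{n_0}(1+O(\eta^{a_0}))$ as $\eta\to0$ ($\rho_->0$, $a_0>0$). Perfect fluid: $dm/dr=4\pi r^2\rho$, $dp/dr=-m\rho/r^2$; Newtonian potential $v$ with $v=v_S-\eta$, $v_S$ the surface potential. Variables $U=u/(1+u)$, $Q=q/(1+q)$, $\Omega=\eta^a/(1+\eta^a)$ with $u=4\pi r^3\rho/m$, $q=m/(r\eta)$, $a>0$, obeying $\frac{dU}{d\lambda}=U(1-U)[(1-Q)(3-4U)-n(\Omega)Q(1-U)]$, $\frac{dQ}{d\lambda}=Q(1-Q)[(2U-1)(1-Q)+Q(1-U)]$,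 $\frac{d\Omega}{d\lambda}=-a\Omega(1-\Omega)Q(1-U)$, $d\lambda/d\ln r=(1-U)^{-1}(1-Q)^{-1}$. *)

theory Defs
  imports "HOL-Analysis.Analysis" "HOL-Library.Landau_Symbols"
begin

text \<open>The equation of state is parametrised by the enthalpy-like variable
  eta, i.e. rhoE eta = rho(p(eta)).\<close>

definition index_fn :: "(real \<Rightarrow> real) \<Rightarrow> real \<Rightarrow> real" where
  "index_fn rhoE eta = eta / rhoE eta * deriv rhoE eta"

text \<open>eta as a function of Omega = eta^a/(1+eta^a).\<close>
definition eta_of :: "real \<Rightarrow> real \<Rightarrow> real" where
  "eta_of a Om = (Om / (1 - Om)) powr (1 / a)"

text \<open>Right-hand sides of the dynamical system; nO is n as a function of Omega.\<close>
definition fU :: "(real \<Rightarrow> real) \<Rightarrow> real \<Rightarrow> real \<Rightarrow> real \<Rightarrow> real" where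
  "fU nO U Q Om = U * (1 - U) * ((1 - Q) * (3 - 4 * U) - nO Om * Q * (1 - U))"

definition fQ :: "real \<Rightarrow> real \<Rightarrow> real" where
  "fQ U Q = Q * (1 - Q) * ((2 * U - 1) * (1 - Q) + Q * (1 - U))"

definition fOm :: "real \<Rightarrow> real \<Rightarrow> real \<Rightarrow> real \<Rightarrow> real" where
  "fOm a U Q Om = - a * Om * (1 - Om) * Q * (1 - U)"

text \<open>Perfect fluid quantities reconstructed from a point (U,Q,Omega):
  u = U/(1-U), q = Q/(1-Q), eta = eta_of a Omega,
  rho = rhoE eta = u q eta / (4 pi r^2), m = q r eta.\<close>
definition fluid_r :: "(real \<Rightarrow> real) \<Rightarrow> real \<Rightarrow> real \<Rightarrow> real \<Rightarrow> real \<Rightarrow> real" where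
  "fluid_r rhoE a U Q Om =
     (let u = U / (1 - U); q = Q / (1 - Q); eta = eta_of a Om
      in sqrt (u * q * eta / (4 * pi * rhoE eta)))"

definition fluid_m :: "(real \<Rightarrow> real) \<Rightarrow> real \<Rightarrow> real \<Rightarrow> real \<Rightarrow> real \<Rightarrow> real" where
  "fluid_m rhoE a U Q Om =
     (Q / (1 - Q)) * fluid_r rhoE a U Q Om * eta_of a Om"

end

theory Submission
  imports Defs
begin

text \<open>The dynamical system yields the logarithmic derivatives
  r'/r = (1 - U)(1 - Q), m'/m = U (1 - Q) and eta'/eta = - Q (1 - U). Near P2 the factor 1 - Q
  decays exponentially, so r and m increase to finite limits R and M. The limits C = M/R and
  D = M/(4 pi rho_- R^3) are then read off from the identities
  Omega^(1/a)/(1 - Q) = (eta + m/r)(1 - Omega)^(1/a) and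
  Omega^(n0/a)/U = (eta^n0/rho)(1 - Omega)^(n0/a)(1 + u) m/(4 pi r^3), using rho ~ rho_- eta^n0.
  Near the surface the comparison principle "if f - g tends to 0 and eventually f' \<ge> g', then
  eventually f \<le> g" gives successively eta = O(R - r), rho = O((R - r)^n0),
  M - m = O((R - r)^(n0+1)) and eta - M (1/r - 1/R) = O((R - r)^(n0+2)); expanding
  M (1/r - 1/R) in powers of (R - r)/R gives the expansion of the potential.\<close>

section \<open>Logarithmic derivatives\<close>

lemma logderiv_mult:
  assumes "(f has_real_derivative f x * \<alpha>) (at x)" "(g has_real_derivative g x * \<beta>) (at x)"
  shows "((\<lambda>x. f x * g x) has_real_derivative (f x * g x) * (\<alpha> + \<beta>)) (at x)"
  by (rule DERIV_cong[OF DERIV_mult[OF assms]]) (simp add: algebra_simps)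

lemma logderiv_divide:
  assumes "(f has_real_derivative f x * \<alpha>) (at x)" "(g has_real_derivative g x * \<beta>) (at x)"
    and "g x \<noteq> 0"
  shows "((\<lambda>x. f x / g x) has_real_derivative (f x / g x) * (\<alpha> - \<beta>)) (at x)"
  by (rule DERIV_cong[OF DERIV_divide[OF assms]]) (use assms(3) in \<open>simp add: field_simps\<close>)

lemma logderiv_cmult:
  assumes "(f has_real_derivative f x * \<alpha>) (at x)"
  shows "((\<lambda>x. c * f x) has_real_derivative (c * f x) * \<alpha>) (at x)"
  by (rule DERIV_cong[OF DERIV_cmult[OF assms]]) (simp add: algebra_simps)

lemma logderiv_powr:
  assumes "(f has_real_derivative f x * \<alpha>) (at x)" "f x > 0"
  shows "((\<lambda>x. f x powr p) has_real_derivative (f x powr p) * (p * \<alpha>)) (at x)"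
  by (rule DERIV_cong[OF DERIV_fun_powr[OF assms]]) (use assms(2) in \<open>simp add: powr_diff field_simps\<close>)

lemma logderiv_sqrt:
  assumes "(f has_real_derivative f x * \<alpha>) (at x)" "f x > 0"
  shows "((\<lambda>x. sqrt (f x)) has_real_derivative sqrt (f x) * (\<alpha> / 2)) (at x)"
proof (rule DERIV_cong[OF DERIV_chain2[OF DERIV_real_sqrt[OF assms(2)] assms(1)]])
  have "f x = sqrt (f x) * sqrt (f x)" using assms(2) by simp
  then show "inverse (sqrt (f x)) / 2 * (f x * \<alpha>) = sqrt (f x) * (\<alpha> / 2)"
    using assms(2) by (simp add: field_simps)
qed

lemma logderiv_ln:
  assumes "(f has_real_derivative f x * \<alpha>) (at x)" "f x > 0"
  shows "((\<lambda>x. ln (f x)) has_real_derivative \<alpha>) (at x)"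
  by (rule DERIV_cong[OF DERIV_chain2[OF DERIV_ln[OF assms(2)] assms(1)]]) (use assms(2) in simp)

lemma logderiv_odds:
  assumes "(f has_real_derivative f x * (1 - f x) * \<alpha>) (at x)" "0 < f x" "f x < 1"
  shows "((\<lambda>x. f x / (1 - f x)) has_real_derivative (f x / (1 - f x)) * \<alpha>) (at x)"
proof -
  have "(f has_real_derivative f x * ((1 - f x) * \<alpha>)) (at x)"
    using assms(1) by (simp add: algebra_simps)
  moreover have "((\<lambda>x. 1 - f x) has_real_derivative (1 - f x) * (- f x * \<alpha>)) (at x)"
    by (rule DERIV_cong[OF DERIV_diff[OF DERIV_const assms(1)]]) (simp add: algebra_simps)
  ultimately show ?thesis
    using logderiv_divide assms(3) by (fastforce simp: algebra_simps)
qed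

section \<open>Estimates at infinity\<close>

lemma eventually_le_if_deriv_le:
  fixes f g f' g' :: "real \<Rightarrow> real"
  assumes "\<forall>\<^sub>F x in at_top. (f has_real_derivative f' x) (at x) \<and>
             (g has_real_derivative g' x) (at x) \<and> g' x \<le> f' x"
    and "((\<lambda>x. f x - g x) \<longlongrightarrow> 0) at_top"
  shows "\<forall>\<^sub>F x in at_top. f x \<le> g x"
proof -
  obtain L where L: "\<And>x. x \<ge> L \<Longrightarrow> (f has_real_derivative f' x) (at x) \<and>
                                    (g has_real_derivative g' x) (at x) \<and> g' x \<le> f' x"
    using assms(1) unfolding eventually_at_top_linorder by blast
  have "f x \<le> g x" if "x \<ge> L" for x
  proof -
    have "\<forall>\<^sub>F y in at_top. f x - g x \<le> f y - g y"
      using eventually_ge_at_top[of x]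
    proof eventually_elim
      case (elim y)
      show ?case
      proof (rule DERIV_nonneg_imp_nondecreasing[OF elim])
        fix t assume "x \<le> t" "t \<le> y"
        then show "\<exists>d. ((\<lambda>x. f x - g x) has_real_derivative d) (at t) \<and> d \<ge> 0"
          using L[of t] that by (auto intro!: DERIV_diff)
      qed
    qed
    then have "f x - g x \<le> 0"
      using tendsto_le[OF trivial_limit_at_top_linorder assms(2) tendsto_const] by blast
    then show ?thesis
      by simp
  qed
  then show ?thesis
    unfolding eventually_at_top_linorder by blast
qed

lemma eventually_bounded_if_deriv_nonpos:
  fixes f f' :: "real \<Rightarrow> real"
  assumes "\<forall>\<^sub>F x in at_top. (f has_real_derivative f' x) (at x) \<and> f' x \<le> 0"
  obtains B where "\<forall>\<^sub>F x in at_top. f x \<le> B"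
proof -
  obtain L where L: "\<And>x. x \<ge> L \<Longrightarrow> (f has_real_derivative f' x) (at x) \<and> f' x \<le> 0"
    using assms by (auto simp: eventually_at_top_linorder)
  have "f x \<le> f L" if "x \<ge> L" for x
    using DERIV_nonpos_imp_nonincreasing[OF that] L by force
  then have "\<forall>\<^sub>F x in at_top. f x \<le> f L"
    unfolding eventually_at_top_linorder by blast
  then show thesis
    by (rule that)
qed

lemma tendsto_if_deriv_pos_bounded:
  fixes f f' :: "real \<Rightarrow> real"
  assumes "\<forall>\<^sub>F x in at_top. (f has_real_derivative f' x) (at x) \<and> f' x > 0"
    and "\<forall>\<^sub>F x in at_top. f x \<le> B"
  obtains c where "(f \<longlongrightarrow> c) at_top" "\<forall>\<^sub>F x in at_top. f x < c"
proof -
  obtain L where L: "\<And>x. x \<ge> L \<Longrightarrow> (f has_real_derivative f' x) (at x) \<and> f' x > 0 \<and> f x \<le> B"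
    using eventually_conj[OF assms] by (auto simp: eventually_at_top_linorder)
  have increasing: "f x < f y" if "L \<le> x" "x < y" for x y
  proof (rule DERIV_pos_imp_increasing[OF that(2)])
    fix t assume "x \<le> t" "t \<le> y"
    then show "\<exists>d. (f has_real_derivative d) (at t) \<and> d > 0"
      using L[of t] that(1) by auto
  qed
  define c where "c = Sup (f ` {L..})"
  have bdd: "bdd_above (f ` {L..})"
    using L by (auto intro!: bdd_aboveI)
  have le: "f x \<le> c" if "x \<ge> L" for x
    unfolding c_def using bdd that by (auto intro!: cSup_upper)
  have "(f \<longlongrightarrow> c) at_top"
  proof (rule increasing_tendsto)
    show "\<forall>\<^sub>F x in at_top. f x \<le> c"
      using eventually_ge_at_top[of L] by eventually_elim (rule le)
  next
    fix y assume "y < c"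
    then obtain x where x: "x \<ge> L" "y < f x"
      using less_cSup_iff[OF _ bdd] unfolding c_def by auto
    show "\<forall>\<^sub>F z in at_top. y < f z"
      using eventually_ge_at_top[of x]
    proof eventually_elim
      case (elim z)
      show ?case
        using increasing[of x z] x elim by (cases "x = z") auto
    qed
  qed
  moreover have "\<forall>\<^sub>F x in at_top. f x < c"
    using eventually_ge_at_top[of L]
  proof eventually_elim
    case (elim x)
    show ?case
      using increasing[of x "x + 1"] le[of "x + 1"] elim by linarith
  qed
  ultimately show thesis
    using that by blast
qed

lemma powr_bigo_powr_if_tendsto_0:
  fixes g :: "'a \<Rightarrow> real"
  assumes "(g \<longlongrightarrow> 0) F" "\<forall>\<^sub>F x in F. 0 < g x" "p \<le> q"
  shows "(\<lambda>x. g x powr q) \<in> O[F](\<lambda>x. g x powr p)"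
proof (rule bigoI[where c = 1])
  have "\<forall>\<^sub>F x in F. g x < 1"
    using assms(1) by (rule order_tendstoD) simp
  with assms(2) show "\<forall>\<^sub>F x in F. norm (g x powr q) \<le> 1 * norm (g x powr p)"
    by eventually_elim (use assms(3) in \<open>auto intro: powr_mono'\<close>)
qed

section \<open>Orbits converging to P2\<close>

lemma polytrope_ratio_tendsto:
  fixes rho :: "real \<Rightarrow> real"
  assumes "c > 0" "a0 > 0"
    and "(\<lambda>x. rho x / (c * x powr n) - 1) \<in> O[at_right 0](\<lambda>x. x powr a0)"
  shows "((\<lambda>x. x powr n / rho x) \<longlongrightarrow> 1 / c) (at_right 0)"
proof -
  obtain K where K: "\<forall>\<^sub>F x in at_right 0. norm (rho x / (c * x powr n) - 1) \<le> K * norm (x powr a0)"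
    using assms(3) by (elim landau_o.bigE)
  have "((\<lambda>x. x powr a0) \<longlongrightarrow> 0) (at_right 0)"
    by (rule tendsto_zero_powrI[OF tendsto_ident_at tendsto_const _ assms(2)])
      (auto simp: eventually_at_filter)
  then have "((\<lambda>x. K * norm (x powr a0)) \<longlongrightarrow> 0) (at_right 0)"
    using tendsto_mult_right_zero tendsto_norm_zero by blast
  then have "((\<lambda>x. rho x / (c * x powr n) - 1) \<longlongrightarrow> 0) (at_right 0)"
    by (rule Lim_null_comparison[OF K])
  then have "((\<lambda>x. inverse ((rho x / (c * x powr n) - 1) + 1) / c) \<longlongrightarrow> inverse (0 + 1) / c) (at_right 0)"
    by (intro tendsto_intros) (use assms(1) in auto)
  then show ?thesis
    using assms(1) by (simp add: field_simps)
qed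

lemma powr_eq_eta_of_powr:
  assumes "Om < 1"
  shows "Om powr (s / a) = eta_of a Om powr s * (1 - Om) powr (s / a)"
proof -
  have "Om powr (s / a) = (Om / (1 - Om) * (1 - Om)) powr (s / a)"
    using assms by simp
  also have "\<dots> = (Om / (1 - Om)) powr (s / a) * (1 - Om) powr (s / a)"
    by (rule powr_mult)
  also have "(Om / (1 - Om)) powr (s / a) = eta_of a Om powr s"
    unfolding eta_of_def by (simp add: powr_powr)
  finally show ?thesis .
qed

text \<open>The polytropic asymptotics of the equation of state enter only through the limit
  polytrope_limit.\<close>
locale orbit_to_P2 =
  fixes rhoE :: "real \<Rightarrow> real" and rho_minus n0 a lam0 :: real
    and U Q Om :: "real \<Rightarrow> real"
  assumes rho_pos: "\<And>eta. eta > 0 \<Longrightarrow> rhoE eta > 0"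
    and rho_differentiable: "\<And>eta. eta > 0 \<Longrightarrow> rhoE differentiable (at eta)"
    and rho_minus_pos: "rho_minus > 0"
    and polytrope_limit: "((\<lambda>eta. eta powr n0 / rhoE eta) \<longlongrightarrow> 1 / rho_minus) (at_right 0)"
    and n0_pos: "n0 > 0"
    and a_pos: "a > 0"
    and in_cube: "\<And>l. l \<ge> lam0 \<Longrightarrow> 0 < U l \<and> U l < 1 \<and> 0 < Q l \<and> Q l < 1 \<and> 0 < Om l \<and> Om l < 1"
    and odeU: "\<And>l. l \<ge> lam0 \<Longrightarrow>
      (U has_real_derivative fU (\<lambda>w. index_fn rhoE (eta_of a w)) (U l) (Q l) (Om l)) (at l)"
    and odeQ: "\<And>l. l \<ge> lam0 \<Longrightarrow> (Q has_real_derivative fQ (U l) (Q l)) (at l)"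
    and odeOm: "\<And>l. l \<ge> lam0 \<Longrightarrow> (Om has_real_derivative fOm a (U l) (Q l) (Om l)) (at l)"
    and U_tendsto: "(U \<longlongrightarrow> 0) at_top"
    and Q_tendsto: "(Q \<longlongrightarrow> 1) at_top"
    and Om_tendsto: "(Om \<longlongrightarrow> 0) at_top"
begin

definition eta :: "real \<Rightarrow> real" where
  "eta l = eta_of a (Om l)"

definition density :: "real \<Rightarrow> real" where
  "density l = rhoE (eta l)"

definition radius :: "real \<Rightarrow> real" where
  "radius l = fluid_r rhoE a (U l) (Q l) (Om l)"

definition mass :: "real \<Rightarrow> real" where
  "mass l = fluid_m rhoE a (U l) (Q l) (Om l)"

lemma cube_bounds:
  assumes "l \<ge> lam0"
  shows "0 < U l" "U l < 1" "0 < Q l" "Q l < 1" "0 < Om l" "Om l < 1"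
  using in_cube[OF assms] by auto

lemma eta_pos: "l \<ge> lam0 \<Longrightarrow> 0 < eta l"
  using in_cube[of l] by (simp add: eta_def eta_of_def)

lemma density_pos: "l \<ge> lam0 \<Longrightarrow> 0 < density l"
  using rho_pos eta_pos by (simp add: density_def)

lemma radius_eq_sqrt:
  "radius l = sqrt (U l / (1 - U l) * (Q l / (1 - Q l)) * eta l / (4 * pi * density l))"
  by (simp add: radius_def fluid_r_def eta_def density_def Let_def)

lemma radius_pos: "l \<ge> lam0 \<Longrightarrow> 0 < radius l"
  using in_cube[of l] eta_pos[of l] density_pos[of l] by (simp add: radius_eq_sqrt)

lemma radius_sq:
  "l \<ge> lam0 \<Longrightarrow> radius l ^ 2 = U l / (1 - U l) * (Q l / (1 - Q l)) * eta l / (4 * pi * density l)"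
  using in_cube[of l] eta_pos[of l] density_pos[of l] by (simp add: radius_eq_sqrt)

lemma mass_eq: "mass l = Q l / (1 - Q l) * radius l * eta l"
  by (simp add: mass_def fluid_m_def radius_def eta_def)

lemma mass_pos: "l \<ge> lam0 \<Longrightarrow> 0 < mass l"
  using in_cube[of l] eta_pos[of l] radius_pos[of l] by (simp add: mass_eq)

text \<open>The next two lemmas are the relations u = 4 pi r^3 rho / m and q = m / (r eta) defining
  u and q, with denominators cleared.\<close>
lemma mass_U_eq:
  assumes "l \<ge> lam0"
  shows "mass l * U l = 4 * pi * density l * radius l ^ 3 * (1 - U l)"
proof -
  have "mass l * U l = (U l / (1 - U l) * (Q l / (1 - Q l)) * eta l) * radius l * (1 - U l)"
    using in_cube[OF assms] by (simp add: mass_eq)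
  also have "\<dots> = (4 * pi * density l * radius l ^ 2) * radius l * (1 - U l)"
    using radius_sq[OF assms] density_pos[OF assms] by simp
  finally show ?thesis
    by (simp add: power2_eq_square power3_eq_cube)
qed

lemma eta_Q_eq: "l \<ge> lam0 \<Longrightarrow> eta l * Q l = mass l * (1 - Q l) / radius l"
  using in_cube[of l] radius_pos[of l] by (simp add: mass_eq field_simps)

lemma eta_has_deriv:
  assumes "l \<ge> lam0"
  shows "(eta has_real_derivative eta l * (- Q l * (1 - U l))) (at l)"
proof -
  have "(Om has_real_derivative Om l * (1 - Om l) * (- a * Q l * (1 - U l))) (at l)"
    using odeOm[OF assms] by (simp add: fOm_def algebra_simps)
  from logderiv_odds[OF this] in_cube[OF assms]
  have "((\<lambda>l. Om l / (1 - Om l)) has_real_derivative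
          (Om l / (1 - Om l)) * (- a * Q l * (1 - U l))) (at l)"
    by simp
  from logderiv_powr[OF this, of "1 / a"] in_cube[OF assms] a_pos show ?thesis
    by (simp add: eta_def[abs_def] eta_of_def)
qed

lemma density_has_deriv:
  assumes "l \<ge> lam0"
  shows "(density has_real_derivative
            density l * (- index_fn rhoE (eta l) * Q l * (1 - U l))) (at l)"
proof (rule DERIV_cong)
  have "(rhoE has_real_derivative deriv rhoE (eta l)) (at (eta l))"
    using rho_differentiable eta_pos[OF assms] DERIV_deriv_iff_real_differentiable by blast
  from DERIV_chain2[OF this eta_has_deriv[OF assms]]
  show "(density has_real_derivative deriv rhoE (eta l) * (eta l * (- Q l * (1 - U l)))) (at l)"
    by (simp add: density_def[abs_def])
  show "deriv rhoE (eta l) * (eta l * (- Q l * (1 - U l)))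
      = density l * (- index_fn rhoE (eta l) * Q l * (1 - U l))"
    using density_pos[OF assms] by (simp add: density_def index_fn_def)
qed

lemma odds_U_has_deriv:
  assumes "l \<ge> lam0"
  shows "((\<lambda>l. U l / (1 - U l)) has_real_derivative U l / (1 - U l) *
            ((1 - Q l) * (3 - 4 * U l) - index_fn rhoE (eta l) * Q l * (1 - U l))) (at l)"
  using odeU[OF assms] in_cube[OF assms]
  by (intro logderiv_odds) (simp_all add: fU_def eta_def algebra_simps)

lemma odds_Q_has_deriv:
  assumes "l \<ge> lam0"
  shows "((\<lambda>l. Q l / (1 - Q l)) has_real_derivative Q l / (1 - Q l) *
            ((2 * U l - 1) * (1 - Q l) + Q l * (1 - U l))) (at l)"
  using odeQ[OF assms] in_cube[OF assms]
  by (intro logderiv_odds) (simp_all add: fQ_def algebra_simps)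

lemma radius_has_deriv:
  assumes "l \<ge> lam0"
  shows "(radius has_real_derivative radius l * ((1 - U l) * (1 - Q l))) (at l)"
proof -
  define S where "S l = U l / (1 - U l) * (Q l / (1 - Q l)) * eta l / (4 * pi * density l)" for l
  note P = eta_pos[OF assms] density_pos[OF assms] in_cube[OF assms]
  have "(S has_real_derivative S l * (2 * ((1 - U l) * (1 - Q l)))) (at l)"
    unfolding S_def[abs_def]
    by (rule DERIV_cong[OF logderiv_divide[OF
          logderiv_mult[OF logderiv_mult[OF odds_U_has_deriv odds_Q_has_deriv] eta_has_deriv]
          logderiv_cmult[OF density_has_deriv]]])
      (use assms P in \<open>auto simp: algebra_simps\<close>)
  moreover have "S l > 0"
    using P by (simp add: S_def)
  ultimately have "((\<lambda>l. sqrt (S l)) has_real_derivative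
      sqrt (S l) * (2 * ((1 - U l) * (1 - Q l)) / 2)) (at l)"
    by (rule logderiv_sqrt)
  moreover have "radius = (\<lambda>l. sqrt (S l))"
    by (simp add: radius_eq_sqrt[abs_def] S_def)
  ultimately show ?thesis
    by simp
qed

lemma mass_has_deriv:
  assumes "l \<ge> lam0"
  shows "(mass has_real_derivative mass l * (U l * (1 - Q l))) (at l)"
proof -
  have "((\<lambda>l. Q l / (1 - Q l) * radius l * eta l) has_real_derivative
      mass l * (U l * (1 - Q l))) (at l)"
    by (rule DERIV_cong[OF logderiv_mult[OF logderiv_mult[OF odds_Q_has_deriv radius_has_deriv]
          eta_has_deriv]])
      (use assms in \<open>simp_all add: mass_eq algebra_simps\<close>)
  moreover have "mass = (\<lambda>l. Q l / (1 - Q l) * radius l * eta l)"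
    by (simp add: mass_eq[abs_def])
  ultimately show ?thesis
    by simp
qed

lemma eta_tendsto_0: "(eta \<longlongrightarrow> 0) at_top"
proof -
  have "((\<lambda>l. Om l / (1 - Om l)) \<longlongrightarrow> 0 / (1 - 0)) at_top"
    by (intro tendsto_intros Om_tendsto) simp
  moreover have "\<forall>\<^sub>F l in at_top. 0 \<le> Om l / (1 - Om l)"
    using eventually_ge_at_top[of lam0] by eventually_elim (simp add: cube_bounds less_imp_le)
  ultimately show ?thesis
    unfolding eta_def[abs_def] eta_of_def using a_pos
    by (intro tendsto_zero_powrI[OF _ tendsto_const]) auto
qed

lemma eta_at_right_0: "filterlim eta (at_right 0) at_top"
proof (rule tendsto_imp_filterlim_at_right[OF eta_tendsto_0])
  show "\<forall>\<^sub>F l in at_top. 0 < eta l"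
    using eventually_ge_at_top[of lam0] by eventually_elim (rule eta_pos)
qed

lemma density_ratio_tendsto:
  "((\<lambda>l. eta l powr n0 / density l) \<longlongrightarrow> 1 / rho_minus) at_top"
  using filterlim_compose[OF polytrope_limit eta_at_right_0] by (simp add: density_def[abs_def])

lemma eventually_density_le: "\<forall>\<^sub>F l in at_top. density l \<le> 2 * rho_minus * eta l powr n0"
proof -
  have "\<forall>\<^sub>F l in at_top. 1 / (2 * rho_minus) < eta l powr n0 / density l"
    using density_ratio_tendsto by (rule order_tendstoD) (use rho_minus_pos in \<open>simp add: field_simps\<close>)
  with eventually_ge_at_top[of lam0] show ?thesis
    by eventually_elim (use density_pos rho_minus_pos in \<open>auto simp: field_simps\<close>)
qed

text \<open>Near P2 the equation for Q reads (1 - Q)' \<approx> -(1 - Q), so 1 - Q decays exponentially and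
  a positive function whose logarithmic derivative is at most 1 - Q stays bounded.\<close>
lemma tendsto_of_logderiv_le_one_minus_Q:
  assumes "\<forall>\<^sub>F l in at_top. (f has_real_derivative f l * (g l * (1 - Q l))) (at l)
                              \<and> 0 < f l \<and> 0 < g l \<and> g l \<le> 1"
  obtains c where "(f \<longlongrightarrow> c) at_top" "\<forall>\<^sub>F l in at_top. f l < c"
proof -
  define \<beta> where "\<beta> l = (2 * U l - 1) * (1 - Q l) + Q l * (1 - U l)" for l
  have "((\<lambda>l. Q l * \<beta> l) \<longlongrightarrow> 1 * ((2 * 0 - 1) * (1 - 1) + 1 * (1 - 0))) at_top"
    unfolding \<beta>_def by (intro tendsto_intros U_tendsto Q_tendsto)
  then have "\<forall>\<^sub>F l in at_top. 1 / 2 < Q l * \<beta> l"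
    by (rule order_tendstoD) simp
  with assms eventually_ge_at_top[of lam0]
  have "\<forall>\<^sub>F l in at_top. ((\<lambda>l. ln (f l) + 2 * (1 - Q l)) has_real_derivative
          g l * (1 - Q l) + 2 * - (Q l * (1 - Q l) * \<beta> l)) (at l)
          \<and> g l * (1 - Q l) + 2 * - (Q l * (1 - Q l) * \<beta> l) \<le> 0"
  proof eventually_elim
    case (elim l)
    have "((\<lambda>l. ln (f l)) has_real_derivative g l * (1 - Q l)) (at l)"
      by (rule logderiv_ln) (use elim in auto)
    moreover have "((\<lambda>l. 1 - Q l) has_real_derivative - (Q l * (1 - Q l) * \<beta> l)) (at l)"
      using DERIV_diff[OF DERIV_const odeQ[of l]] elim by (simp add: fQ_def \<beta>_def)
    ultimately have "((\<lambda>l. ln (f l) + 2 * (1 - Q l)) has_real_derivative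
        g l * (1 - Q l) + 2 * - (Q l * (1 - Q l) * \<beta> l)) (at l)"
      by (intro DERIV_add DERIV_cmult)
    moreover have "g l * (1 - Q l) + 2 * - (Q l * (1 - Q l) * \<beta> l)
        = (1 - Q l) * (g l - 2 * (Q l * \<beta> l))"
      by (simp add: algebra_simps)
    moreover have "(1 - Q l) * (g l - 2 * (Q l * \<beta> l)) \<le> 0"
      using elim cube_bounds[of l] by (intro mult_nonneg_nonpos) auto
    ultimately show ?case
      by simp
  qed
  then obtain B where B: "\<forall>\<^sub>F l in at_top. ln (f l) + 2 * (1 - Q l) \<le> B"
    by (rule eventually_bounded_if_deriv_nonpos)
  from assms eventually_ge_at_top[of lam0]
  have "\<forall>\<^sub>F l in at_top. (f has_real_derivative f l * (g l * (1 - Q l))) (at l)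
                              \<and> 0 < f l * (g l * (1 - Q l))"
    by eventually_elim (simp add: cube_bounds)
  moreover from B assms eventually_ge_at_top[of lam0]
  have "\<forall>\<^sub>F l in at_top. f l \<le> exp B"
    by eventually_elim (use cube_bounds in \<open>smt (verit) exp_le_cancel_iff exp_ln\<close>)
  ultimately show thesis
    using that by (rule tendsto_if_deriv_pos_bounded)
qed

definition R :: real where
  "R = Lim at_top radius"

definition M :: real where
  "M = Lim at_top mass"

lemma radius_tendsto: "(radius \<longlongrightarrow> R) at_top"
  and eventually_radius_less: "\<forall>\<^sub>F l in at_top. radius l < R"
proof -
  have "\<forall>\<^sub>F l in at_top. (radius has_real_derivative radius l * ((1 - U l) * (1 - Q l))) (at l)
          \<and> 0 < radius l \<and> 0 < 1 - U l \<and> 1 - U l \<le> 1"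
    using eventually_ge_at_top[of lam0]
    by eventually_elim (simp add: radius_has_deriv radius_pos cube_bounds less_imp_le)
  then obtain c where "(radius \<longlongrightarrow> c) at_top" "\<forall>\<^sub>F l in at_top. radius l < c"
    by (rule tendsto_of_logderiv_le_one_minus_Q)
  moreover from this have "R = c"
    unfolding R_def by (simp add: tendsto_Lim)
  ultimately show "(radius \<longlongrightarrow> R) at_top" "\<forall>\<^sub>F l in at_top. radius l < R"
    by simp_all
qed

lemma mass_tendsto: "(mass \<longlongrightarrow> M) at_top"
  and eventually_mass_less: "\<forall>\<^sub>F l in at_top. mass l < M"
proof -
  have "\<forall>\<^sub>F l in at_top. (mass has_real_derivative mass l * (U l * (1 - Q l))) (at l)
          \<and> 0 < mass l \<and> 0 < U l \<and> U l \<le> 1"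
    using eventually_ge_at_top[of lam0]
    by eventually_elim (simp add: mass_has_deriv mass_pos cube_bounds less_imp_le)
  then obtain c where "(mass \<longlongrightarrow> c) at_top" "\<forall>\<^sub>F l in at_top. mass l < c"
    by (rule tendsto_of_logderiv_le_one_minus_Q)
  moreover from this have "M = c"
    unfolding M_def by (simp add: tendsto_Lim)
  ultimately show "(mass \<longlongrightarrow> M) at_top" "\<forall>\<^sub>F l in at_top. mass l < M"
    by simp_all
qed

lemma R_pos: "0 < R"
proof -
  obtain l where "\<forall>k\<ge>l. radius k < R \<and> lam0 \<le> k"
    using eventually_conj[OF eventually_radius_less eventually_ge_at_top[of lam0]]
    unfolding eventually_at_top_linorder by blast
  then show ?thesis
    using radius_pos[of l] by force
qed

lemma M_pos: "0 < M"
proof -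
  obtain l where "\<forall>k\<ge>l. mass k < M \<and> lam0 \<le> k"
    using eventually_conj[OF eventually_mass_less eventually_ge_at_top[of lam0]]
    unfolding eventually_at_top_linorder by blast
  then show ?thesis
    using mass_pos[of l] by force
qed

definition C :: real where
  "C = M / R"

definition D :: real where
  "D = M / (4 * pi * rho_minus * R ^ 3)"

lemma C_pos: "0 < C" and D_pos: "0 < D"
  using M_pos R_pos rho_minus_pos by (simp_all add: C_def D_def)

lemma R_sq_eq: "R\<^sup>2 = 1 / (4 * pi * rho_minus) * (C / D)"
  and M_sq_eq: "M\<^sup>2 = 1 / (4 * pi * rho_minus) * (C ^ 3 / D)"
  using M_pos R_pos rho_minus_pos
  by (simp_all add: C_def D_def field_simps power2_eq_square power3_eq_cube)

lemma C_tendsto: "((\<lambda>l. Om l powr (1 / a) / (1 - Q l)) \<longlongrightarrow> C) at_top"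
proof -
  have "((\<lambda>l. (eta l + mass l / radius l) * (1 - Om l) powr (1 / a))
          \<longlongrightarrow> (0 + M / R) * (1 - 0) powr (1 / a)) at_top"
    by (intro tendsto_intros eta_tendsto_0 mass_tendsto radius_tendsto Om_tendsto)
      (use R_pos in auto)
  moreover have "\<forall>\<^sub>F l in at_top.
      (eta l + mass l / radius l) * (1 - Om l) powr (1 / a) = Om l powr (1 / a) / (1 - Q l)"
    using eventually_ge_at_top[of lam0]
  proof eventually_elim
    case (elim l)
    have "eta l + mass l / radius l = eta l / (1 - Q l)"
      using radius_pos[OF elim] cube_bounds[OF elim] by (simp add: mass_eq field_simps)
    moreover have "Om l powr (1 / a) = eta l * (1 - Om l) powr (1 / a)"
      using powr_eq_eta_of_powr[of "Om l" 1 a] eta_pos[OF elim] cube_bounds[OF elim]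
      by (simp add: eta_def)
    ultimately show ?case
      by simp
  qed
  ultimately show ?thesis
    by (simp add: C_def Lim_transform_eventually)
qed

lemma D_tendsto: "((\<lambda>l. Om l powr (n0 / a) / U l) \<longlongrightarrow> D) at_top"
proof -
  have "((\<lambda>l. eta l powr n0 / density l * (1 - Om l) powr (n0 / a) * (1 + U l / (1 - U l))
            * mass l / (4 * pi * radius l ^ 3))
          \<longlongrightarrow> 1 / rho_minus * (1 - 0) powr (n0 / a) * (1 + 0 / (1 - 0)) * M / (4 * pi * R ^ 3)) at_top"
    by (intro tendsto_intros density_ratio_tendsto U_tendsto Om_tendsto mass_tendsto radius_tendsto)
      (use R_pos in auto)
  moreover have "\<forall>\<^sub>F l in at_top.
      eta l powr n0 / density l * (1 - Om l) powr (n0 / a) * (1 + U l / (1 - U l))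
        * mass l / (4 * pi * radius l ^ 3) = Om l powr (n0 / a) / U l"
    using eventually_ge_at_top[of lam0]
  proof eventually_elim
    case (elim l)
    have "4 * pi * density l * radius l ^ 3 = mass l * U l / (1 - U l)"
      using mass_U_eq[OF elim] cube_bounds[OF elim] by (simp add: field_simps)
    with powr_eq_eta_of_powr[of "Om l" n0 a] density_pos[OF elim] radius_pos[OF elim]
      mass_pos[OF elim] cube_bounds[OF elim]
    show ?case
      by (simp add: eta_def field_simps)
  qed
  ultimately show ?thesis
    using rho_minus_pos by (simp add: D_def Lim_transform_eventually field_simps)
qed

section \<open>Behaviour near the surface\<close>

definition depth :: "real \<Rightarrow> real" where
  "depth l = R - radius l"

lemma depth_tendsto_0: "(depth \<longlongrightarrow> 0) at_top"
  using tendsto_diff[OF tendsto_const radius_tendsto, of R] by (simp add: depth_def[abs_def])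

lemma eventually_depth_pos: "\<forall>\<^sub>F l in at_top. 0 < depth l"
  using eventually_radius_less by eventually_elim (simp add: depth_def)

lemma depth_powr_tendsto_0: "p > 0 \<Longrightarrow> ((\<lambda>l. depth l powr p) \<longlongrightarrow> 0) at_top"
  using eventually_depth_pos
  by (intro tendsto_zero_powrI[OF depth_tendsto_0 tendsto_const]) (auto elim: eventually_mono)

lemma depth_has_deriv:
  "l \<ge> lam0 \<Longrightarrow> (depth has_real_derivative - (radius l * ((1 - U l) * (1 - Q l)))) (at l)"
  using DERIV_diff[OF DERIV_const radius_has_deriv, of l R] by (simp add: depth_def[abs_def])

lemma depth_powr_has_deriv:
  assumes "l \<ge> lam0" "0 < depth l"
  shows "((\<lambda>l. depth l powr p) has_real_derivative
            - (p * depth l powr (p - 1) * (radius l * ((1 - U l) * (1 - Q l))))) (at l)"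
  using DERIV_fun_powr[OF depth_has_deriv[OF assms(1)] assms(2), of p] by simp

lemma eventually_near_surface:
  "\<forall>\<^sub>F l in at_top. lam0 \<le> l \<and> R / 2 \<le> radius l \<and> radius l < R \<and> mass l < M"
proof -
  have "\<forall>\<^sub>F l in at_top. R / 2 < radius l"
    using radius_tendsto by (rule order_tendstoD) (use R_pos in simp)
  with eventually_ge_at_top[of lam0] eventually_radius_less eventually_mass_less
  show ?thesis
    by eventually_elim auto
qed

lemma eta_le_depth: "\<exists>c>0. \<forall>\<^sub>F l in at_top. eta l \<le> c * depth l"
proof -
  define c where "c = 4 * M / R\<^sup>2"
  have "\<forall>\<^sub>F l in at_top. eta l \<le> c * depth l"
  proof (rule eventually_le_if_deriv_le)
    show "\<forall>\<^sub>F l in at_top. (eta has_real_derivative eta l * (- Q l * (1 - U l))) (at l) \<and>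
        ((\<lambda>l. c * depth l) has_real_derivative c * - (radius l * ((1 - U l) * (1 - Q l)))) (at l) \<and>
        c * - (radius l * ((1 - U l) * (1 - Q l))) \<le> eta l * (- Q l * (1 - U l))"
      using eventually_near_surface
    proof eventually_elim
      case (elim l)
      then have l: "lam0 \<le> l" "R / 2 \<le> radius l" "mass l < M"
        by auto
      have "M = c * (R / 2)\<^sup>2"
        using R_pos by (simp add: c_def field_simps power2_eq_square)
      also have "\<dots> \<le> c * (radius l)\<^sup>2"
        using l R_pos M_pos by (intro mult_left_mono power_mono) (auto simp: c_def)
      finally have "mass l * (1 - Q l) / radius l \<le> c * radius l * (1 - Q l)"
        using l radius_pos[of l] cube_bounds[of l]
        by (simp add: divide_le_eq power2_eq_square mult_right_mono)
      then have "eta l * Q l * (1 - U l) \<le> c * radius l * (1 - Q l) * (1 - U l)"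
        using eta_Q_eq[OF l(1)] cube_bounds[OF l(1)] by (intro mult_right_mono) auto
      then have "c * - (radius l * ((1 - U l) * (1 - Q l))) \<le> eta l * (- Q l * (1 - U l))"
        by (simp add: algebra_simps)
      then show ?case
        using eta_has_deriv[OF l(1)] DERIV_cmult[OF depth_has_deriv[OF l(1)]] by blast
    qed
    show "((\<lambda>l. eta l - c * depth l) \<longlongrightarrow> 0) at_top"
      using tendsto_diff[OF eta_tendsto_0 tendsto_mult[OF tendsto_const depth_tendsto_0]] by simp
  qed
  moreover have "c > 0"
    using M_pos R_pos by (simp add: c_def)
  ultimately show ?thesis
    by blast
qed

lemma density_le_depth: "\<exists>B>0. \<forall>\<^sub>F l in at_top. density l \<le> B * depth l powr n0"
proof -
  obtain c where c: "c > 0" "\<forall>\<^sub>F l in at_top. eta l \<le> c * depth l"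
    using eta_le_depth by blast
  have "\<forall>\<^sub>F l in at_top. density l \<le> (2 * rho_minus * c powr n0) * depth l powr n0"
    using eventually_density_le c(2) eventually_depth_pos eventually_ge_at_top[of lam0]
  proof eventually_elim
    case (elim l)
    have "eta l powr n0 \<le> (c * depth l) powr n0"
      using elim less_imp_le[OF eta_pos[OF elim(4)]] n0_pos by (intro powr_mono2) auto
    also have "\<dots> = c powr n0 * depth l powr n0"
      using c elim by (simp add: powr_mult)
    finally have "2 * rho_minus * eta l powr n0 \<le> 2 * rho_minus * (c powr n0 * depth l powr n0)"
      using rho_minus_pos by simp
    with elim show ?case
      by simp
  qed
  with c rho_minus_pos show ?thesis
    by (intro exI[of _ "2 * rho_minus * c powr n0"]) auto
qed

lemma mass_deriv_le:
  assumes "lam0 \<le> l" "radius l < R" "density l \<le> B * depth l powr n0"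
  shows "mass l * (U l * (1 - Q l))
           \<le> 4 * pi * R\<^sup>2 * B * depth l powr n0 * (radius l * ((1 - U l) * (1 - Q l)))"
proof -
  have "mass l * (U l * (1 - Q l)) = (mass l * U l) * (1 - Q l)"
    by (simp only: mult.assoc)
  also have "\<dots> = 4 * pi * density l * radius l ^ 3 * (1 - U l) * (1 - Q l)"
    by (simp only: mass_U_eq[OF assms(1)])
  also have "\<dots> = 4 * pi * (density l * (radius l)\<^sup>2) * (radius l * ((1 - U l) * (1 - Q l)))"
    by (simp add: power2_eq_square power3_eq_cube mult_ac)
  also have "\<dots> \<le> 4 * pi * (B * depth l powr n0 * R\<^sup>2) * (radius l * ((1 - U l) * (1 - Q l)))"
    using assms radius_pos[OF assms(1)] density_pos[OF assms(1)] cube_bounds[OF assms(1)]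
    by (intro mult_right_mono mult_left_mono mult_mono power_mono) auto
  finally show ?thesis
    by (simp add: mult_ac)
qed

lemma mass_defect_le: "\<exists>K>0. \<forall>\<^sub>F l in at_top. M - mass l \<le> K * depth l powr (n0 + 1)"
proof -
  obtain B where B: "B > 0" "\<forall>\<^sub>F l in at_top. density l \<le> B * depth l powr n0"
    using density_le_depth by blast
  define K where "K = 4 * pi * R\<^sup>2 * B / (n0 + 1)"
  define w where "w l = (1 - U l) * (1 - Q l)" for l
  have "\<forall>\<^sub>F l in at_top. M - mass l \<le> K * depth l powr (n0 + 1)"
  proof (rule eventually_le_if_deriv_le)
    show "\<forall>\<^sub>F l in at_top.
        ((\<lambda>l. M - mass l) has_real_derivative - (mass l * (U l * (1 - Q l)))) (at l) \<and>
        ((\<lambda>l. K * depth l powr (n0 + 1)) has_real_derivative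
           K * - ((n0 + 1) * depth l powr (n0 + 1 - 1) * (radius l * w l))) (at l) \<and>
        K * - ((n0 + 1) * depth l powr (n0 + 1 - 1) * (radius l * w l))
          \<le> - (mass l * (U l * (1 - Q l)))"
      using eventually_near_surface B(2) eventually_depth_pos
    proof eventually_elim
      case (elim l)
      then have l: "lam0 \<le> l" "radius l < R" "0 < depth l" "density l \<le> B * depth l powr n0"
        by auto
      have "K * ((n0 + 1) * depth l powr (n0 + 1 - 1) * (radius l * w l))
          = (K * (n0 + 1)) * depth l powr n0 * (radius l * w l)"
        by (simp add: mult_ac)
      also have "K * (n0 + 1) = 4 * pi * R\<^sup>2 * B"
        using n0_pos by (simp add: K_def)
      finally have K_eq: "K * ((n0 + 1) * depth l powr (n0 + 1 - 1) * (radius l * w l))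
          = 4 * pi * R\<^sup>2 * B * depth l powr n0 * (radius l * w l)" .
      have "mass l * (U l * (1 - Q l))
          \<le> K * ((n0 + 1) * depth l powr (n0 + 1 - 1) * (radius l * w l))"
        unfolding K_eq unfolding w_def by (rule mass_deriv_le[OF l(1,2,4)])
      then have "K * - ((n0 + 1) * depth l powr (n0 + 1 - 1) * (radius l * w l))
          \<le> - (mass l * (U l * (1 - Q l)))"
        by simp
      moreover have "((\<lambda>l. M - mass l) has_real_derivative - (mass l * (U l * (1 - Q l)))) (at l)"
        using DERIV_diff[OF DERIV_const mass_has_deriv[OF l(1)], of M] by simp
      ultimately show ?case
        unfolding w_def using DERIV_cmult[OF depth_powr_has_deriv[OF l(1,3)], of K "n0 + 1"] by blast
    qed
    show "((\<lambda>l. M - mass l - K * depth l powr (n0 + 1)) \<longlongrightarrow> 0) at_top"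
      using tendsto_diff[OF tendsto_diff[OF tendsto_const mass_tendsto]
          tendsto_mult[OF tendsto_const depth_powr_tendsto_0[of "n0 + 1"]], of M K] n0_pos
      by simp
  qed
  moreover have "K > 0"
    using R_pos B(1) n0_pos by (simp add: K_def)
  ultimately show ?thesis
    by blast
qed

text \<open>Outside the star the potential is that of the point mass M, and there eta = vS - v would
  equal M (1/r - 1/R).\<close>
definition eta_defect :: "real \<Rightarrow> real" where
  "eta_defect l = eta l - M * (1 / radius l - 1 / R)"

lemma eta_defect_tendsto_0: "(eta_defect \<longlongrightarrow> 0) at_top"
proof -
  have "(eta_defect \<longlongrightarrow> 0 - M * (1 / R - 1 / R)) at_top"
    unfolding eta_defect_def[abs_def]
    by (intro tendsto_intros eta_tendsto_0 radius_tendsto) (use R_pos in auto)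
  then show ?thesis
    by simp
qed

lemma eta_defect_has_deriv:
  assumes "l \<ge> lam0"
  shows "(eta_defect has_real_derivative
            (M - mass l) * ((1 - U l) * (1 - Q l)) / radius l) (at l)"
proof (rule DERIV_cong)
  show "(eta_defect has_real_derivative eta l * (- Q l * (1 - U l))
      - M * ((0 * radius l - 1 * (radius l * ((1 - U l) * (1 - Q l)))) / (radius l * radius l) - 0))
      (at l)"
    unfolding eta_defect_def[abs_def] using radius_pos[OF assms]
    by (intro DERIV_diff DERIV_cmult DERIV_divide DERIV_const eta_has_deriv radius_has_deriv assms)
      auto
  have eta_eq: "eta l = mass l * (1 - Q l) / (radius l * Q l)"
    using eta_Q_eq[OF assms] cube_bounds[OF assms] radius_pos[OF assms] by (simp add: field_simps)
  show "eta l * (- Q l * (1 - U l))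
      - M * ((0 * radius l - 1 * (radius l * ((1 - U l) * (1 - Q l)))) / (radius l * radius l) - 0)
      = (M - mass l) * ((1 - U l) * (1 - Q l)) / radius l"
    unfolding eta_eq using radius_pos[OF assms] cube_bounds[OF assms] by (simp add: field_simps)
qed

lemma eventually_eta_defect_nonpos: "\<forall>\<^sub>F l in at_top. eta_defect l \<le> 0"
proof (rule eventually_le_if_deriv_le)
  show "\<forall>\<^sub>F l in at_top. (eta_defect has_real_derivative
          (M - mass l) * ((1 - U l) * (1 - Q l)) / radius l) (at l) \<and>
        ((\<lambda>l. 0) has_real_derivative 0) (at l) \<and> 0 \<le> (M - mass l) * ((1 - U l) * (1 - Q l)) / radius l"
    using eventually_near_surface
    by eventually_elim (simp add: eta_defect_has_deriv radius_pos cube_bounds less_imp_le)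
  show "((\<lambda>l. eta_defect l - 0) \<longlongrightarrow> 0) at_top"
    using eta_defect_tendsto_0 by simp
qed

lemma eta_defect_deriv_le:
  assumes "lam0 \<le> l" "R / 2 \<le> radius l" "M - mass l \<le> K * depth l powr (n0 + 1)" "0 \<le> K"
  shows "(M - mass l) * ((1 - U l) * (1 - Q l)) / radius l
           \<le> 4 * K / R\<^sup>2 * depth l powr (n0 + 1) * (radius l * ((1 - U l) * (1 - Q l)))"
proof -
  have r: "0 < radius l"
    by (rule radius_pos[OF assms(1)])
  have "R\<^sup>2 \<le> 4 * (radius l)\<^sup>2"
    using assms(2) R_pos power_mono[of "R / 2" "radius l" 2] by (simp add: power_divide)
  then have inv_r: "1 / radius l \<le> 4 / R\<^sup>2 * radius l"
    using r R_pos by (simp add: field_simps power2_eq_square)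
  have "(M - mass l) / radius l \<le> K * depth l powr (n0 + 1) * (1 / radius l)"
    using assms(3) r by (simp add: divide_right_mono)
  also have "\<dots> \<le> K * depth l powr (n0 + 1) * (4 / R\<^sup>2 * radius l)"
    using inv_r assms(4) by (intro mult_left_mono) auto
  finally have "(M - mass l) / radius l * ((1 - U l) * (1 - Q l))
      \<le> K * depth l powr (n0 + 1) * (4 / R\<^sup>2 * radius l) * ((1 - U l) * (1 - Q l))"
    using cube_bounds[OF assms(1)] by (intro mult_right_mono) auto
  then show ?thesis
    by (simp add: mult_ac)
qed

lemma eta_defect_ge: "\<exists>K>0. \<forall>\<^sub>F l in at_top. - K * depth l powr (n0 + 2) \<le> eta_defect l"
proof -
  obtain K1 where K1: "K1 > 0" "\<forall>\<^sub>F l in at_top. M - mass l \<le> K1 * depth l powr (n0 + 1)"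
    using mass_defect_le by blast
  define K where "K = 4 * K1 / ((n0 + 2) * R\<^sup>2)"
  define w where "w l = (1 - U l) * (1 - Q l)" for l
  have "\<forall>\<^sub>F l in at_top. - K * depth l powr (n0 + 2) \<le> eta_defect l"
  proof (rule eventually_le_if_deriv_le)
    show "\<forall>\<^sub>F l in at_top. ((\<lambda>l. - K * depth l powr (n0 + 2)) has_real_derivative
           - K * - ((n0 + 2) * depth l powr (n0 + 2 - 1) * (radius l * w l))) (at l) \<and>
        (eta_defect has_real_derivative (M - mass l) * w l / radius l) (at l) \<and>
        (M - mass l) * w l / radius l
          \<le> - K * - ((n0 + 2) * depth l powr (n0 + 2 - 1) * (radius l * w l))"
      using eventually_near_surface K1(2) eventually_depth_pos
    proof eventually_elim
      case (elim l)
      then have l: "lam0 \<le> l" "R / 2 \<le> radius l" "0 < depth l"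
          "M - mass l \<le> K1 * depth l powr (n0 + 1)"
        by auto
      have "n0 + 2 - 1 = n0 + 1"
        by simp
      then have "- K * - ((n0 + 2) * depth l powr (n0 + 2 - 1) * (radius l * w l))
          = (K * (n0 + 2)) * depth l powr (n0 + 1) * (radius l * w l)"
        by (simp only: mult_ac minus_mult_minus)
      also have "K * (n0 + 2) = 4 * K1 / R\<^sup>2"
        using n0_pos R_pos unfolding K_def by (simp add: divide_simps)
      finally have K_eq: "- K * - ((n0 + 2) * depth l powr (n0 + 2 - 1) * (radius l * w l))
          = 4 * K1 / R\<^sup>2 * depth l powr (n0 + 1) * (radius l * w l)" .
      have "(M - mass l) * w l / radius l
          \<le> - K * - ((n0 + 2) * depth l powr (n0 + 2 - 1) * (radius l * w l))"
        unfolding K_eq unfolding w_def using K1(1) by (intro eta_defect_deriv_le[OF l(1,2,4)]) simp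
      then show ?case
        unfolding w_def
        using DERIV_cmult[OF depth_powr_has_deriv[OF l(1,3)], of "- K" "n0 + 2"]
          eta_defect_has_deriv[OF l(1)] by blast
    qed
    show "((\<lambda>l. - K * depth l powr (n0 + 2) - eta_defect l) \<longlongrightarrow> 0) at_top"
      using tendsto_diff[OF tendsto_mult[OF tendsto_const depth_powr_tendsto_0[of "n0 + 2"]]
          eta_defect_tendsto_0, of "- K"] n0_pos
      by simp
  qed
  moreover have "K > 0"
    using K1(1) R_pos n0_pos by (simp add: K_def)
  ultimately show ?thesis
    by blast
qed

definition rel_depth :: "real \<Rightarrow> real" where
  "rel_depth l = (R - radius l) / R"

lemma rel_depth_tendsto_0: "(rel_depth \<longlongrightarrow> 0) at_top"
  using tendsto_divide[OF depth_tendsto_0 tendsto_const, of R] R_pos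
  by (simp add: rel_depth_def[abs_def] depth_def)

lemma eventually_rel_depth_pos: "\<forall>\<^sub>F l in at_top. 0 < rel_depth l"
  using eventually_depth_pos by eventually_elim (use R_pos in \<open>simp add: rel_depth_def depth_def\<close>)

lemma rel_depth_powr_bigo:
  "p \<le> q \<Longrightarrow> (\<lambda>l. rel_depth l powr q) \<in> O[at_top](\<lambda>l. rel_depth l powr p)"
  by (rule powr_bigo_powr_if_tendsto_0[OF rel_depth_tendsto_0 eventually_rel_depth_pos])

lemma eta_defect_bigo: "eta_defect \<in> O[at_top](\<lambda>l. rel_depth l powr (n0 + 2))"
proof -
  obtain K where K: "K > 0" "\<forall>\<^sub>F l in at_top. - K * depth l powr (n0 + 2) \<le> eta_defect l"
    using eta_defect_ge by blast
  show ?thesis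
  proof (rule bigoI[where c = "K * R powr (n0 + 2)"])
    show "\<forall>\<^sub>F l in at_top.
        norm (eta_defect l) \<le> K * R powr (n0 + 2) * norm (rel_depth l powr (n0 + 2))"
      using K(2) eventually_eta_defect_nonpos eventually_rel_depth_pos
    proof eventually_elim
      case (elim l)
      have "depth l powr (n0 + 2) = R powr (n0 + 2) * rel_depth l powr (n0 + 2)"
        using R_pos elim by (simp add: rel_depth_def depth_def powr_mult[symmetric])
      with elim show ?case
        by simp
    qed
  qed
qed

lemma eventually_potential_remainder_eq:
  "\<forall>\<^sub>F l in at_top. (- M / R - eta l) - (- C * rel_depth l - C * (rel_depth l)\<^sup>2 + - M / R)
      = - (eta_defect l + M / radius l * rel_depth l powr 3)"
  using eventually_ge_at_top[of lam0] eventually_rel_depth_pos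
proof eventually_elim
  case (elim l)
  have cube: "rel_depth l powr 3 = rel_depth l ^ 3"
    using elim by (simp add: powr_realpow)
  show ?case
    unfolding cube unfolding eta_defect_def C_def rel_depth_def using radius_pos[OF elim(1)] R_pos
    by (simp add: field_simps power2_eq_square power3_eq_cube)
qed

lemma surface_potential_expansion:
  "(\<lambda>l. (- M / R - eta l) - (- C * ((R - radius l) / R) - C * ((R - radius l) / R)\<^sup>2 + - M / R))
     \<in> O[at_top](\<lambda>l. ((R - radius l) / R) powr (2 + min 1 n0))"
proof -
  define p where "p = 2 + min 1 n0"
  have "eta_defect \<in> O[at_top](\<lambda>l. rel_depth l powr p)"
    by (rule landau_o.big_trans[OF eta_defect_bigo rel_depth_powr_bigo]) (simp add: p_def)
  moreover have "((\<lambda>l. M / radius l / 1) \<longlongrightarrow> M / R / 1) at_top"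
    by (intro tendsto_intros radius_tendsto) (use R_pos in auto)
  then have "(\<lambda>l. M / radius l) \<in> O[at_top](\<lambda>_. 1)"
    by (rule bigoI_tendsto) simp
  then have "(\<lambda>l. M / radius l * rel_depth l powr 3) \<in> O[at_top](\<lambda>l. 1 * rel_depth l powr p)"
    using rel_depth_powr_bigo[of p 3] by (intro landau_o.big.mult) (simp_all add: p_def)
  ultimately have "(\<lambda>l. - (eta_defect l + M / radius l * rel_depth l powr 3))
      \<in> O[at_top](\<lambda>l. rel_depth l powr p)"
    by (simp add: sum_in_bigo)
  with eventually_potential_remainder_eq show ?thesis
    unfolding rel_depth_def p_def by (subst landau_o.big.in_cong) auto
qed

end

theorem mainTheorem12:
  fixes rhoE :: "real \<Rightarrow> real" and rho_minus n0 a0 a lam0 :: real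
    and U Q Om :: "real \<Rightarrow> real"
  assumes rho_pos: "\<forall>eta>0. rhoE eta > 0"
    and rho_diff: "\<forall>eta>0. rhoE differentiable (at eta)"
    and rho_minus_pos: "rho_minus > 0" and a0_pos: "a0 > 0"
    and polytropic: "(\<lambda>eta. rhoE eta / (rho_minus * eta powr n0) - 1) \<in> O[at_right 0](\<lambda>eta. eta powr a0)"
    and n0_pos: "n0 > 0"
    and a_pos: "a > 0"
    and interior: "\<forall>l\<ge>lam0. U l \<in> {0<..<1} \<and> Q l \<in> {0<..<1} \<and> Om l \<in> {0<..<1}"
    and odeU: "\<forall>l\<ge>lam0. (U has_real_derivative
                 fU (\<lambda>w. index_fn rhoE (eta_of a w)) (U l) (Q l) (Om l)) (at l)"
    and odeQ: "\<forall>l\<ge>lam0. (Q has_real_derivative fQ (U l) (Q l)) (at l)"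
    and odeOm: "\<forall>l\<ge>lam0. (Om has_real_derivative fOm a (U l) (Q l) (Om l)) (at l)"
    and toP2: "(U \<longlongrightarrow> 0) at_top" "(Q \<longlongrightarrow> 1) at_top" "(Om \<longlongrightarrow> 0) at_top"
  shows "\<exists>C D R M.
     0 < C \<and> 0 < D \<and>
     ((\<lambda>l. Om l powr (1 / a) / (1 - Q l)) \<longlongrightarrow> C) at_top \<and>
     ((\<lambda>l. Om l powr (n0 / a) / U l) \<longlongrightarrow> D) at_top \<and>
     0 < R \<and> 0 < M \<and>
     ((\<lambda>l. fluid_r rhoE a (U l) (Q l) (Om l)) \<longlongrightarrow> R) at_top \<and>
     ((\<lambda>l. fluid_m rhoE a (U l) (Q l) (Om l)) \<longlongrightarrow> M) at_top \<and>
     R\<^sup>2 = 1 / (4 * pi * rho_minus) * (C / D) \<and>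
     M\<^sup>2 = 1 / (4 * pi * rho_minus) * (C ^ 3 / D) \<and>
     (let vS = - M / R;
          r = (\<lambda>l. fluid_r rhoE a (U l) (Q l) (Om l));
          v = (\<lambda>l. vS - eta_of a (Om l));
          dr = (\<lambda>l. (R - r l) / R)
      in (\<lambda>l. v l - (- C * dr l - C * (dr l)\<^sup>2 + vS))
           \<in> O[at_top](\<lambda>l. dr l powr (2 + min 1 n0)))"
proof -
  interpret orbit_to_P2 rhoE rho_minus n0 a lam0 U Q Om
    using rho_pos rho_diff rho_minus_pos n0_pos a_pos interior odeU odeQ odeOm toP2
      polytrope_ratio_tendsto[OF rho_minus_pos a0_pos polytropic]
    by unfold_locales auto
  show ?thesis
    unfolding Let_def radius_def[symmetric] mass_def[symmetric] eta_def[symmetric]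
    using C_pos D_pos C_tendsto D_tendsto R_pos M_pos radius_tendsto mass_tendsto R_sq_eq M_sq_eq
      surface_potential_expansion
    by blast
qed

end
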